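(* There is a LOGSPACE-computable many-one reduction $\phi$ from the query evaluation problem for temporal Datalog (given a query $Q$, a dataset $D$ and a tuple $\vec a$, decide whether $\Pi_Q\cup D\models P_Q(\vec a)$) to DTP such that, for each query evaluation instance $I=\langle Q,D,\vec a\rangle$, the query occurring in $\phi(I)$ depends only on $Q$ (and not on $D$ or $\vec a$).
   Context: Temporal Datalog. Constants are partitioned into objects and integer time points; variables into object variables and time variables. A time term is a time point, a time variable, or an expression $t+k$ with $t$ a time variable and $k\in\mathbb{Z}$. Each predicate is either extensional (EDB) or intensional (IDB) and has an arity $n\ge0$, each position being of object sort or time sort; a predicate is rigid if all its positions are of object sort, and temporal if its last position is of time sort and all others are of object sort. An atom $P(t_1,\dots,t_n)$ has terms of the required sorts. A rule is $\bigwedge_i\alpha_i\to\alpha$ with $\alpha$ and all $\alpha_i$ rigid or temporal atoms, $\alpha$ IDB whenever the body is nonempty, and every head variable occurring in the body. A program is a finite set of rules. A fact is a ground rigid or temporal atom without $+$ (identified with the rule $\top\to\alpha$); a dataset is a finite set of EDB facts. Rules are read as universally quantified first-order sentences with $+$ interpreted as integer addition; $\Pi\models\alpha$ denotes entailment. A query is $Q=\langle P_Q,\Pi_Q\rangle$ with $\Pi_Q$ a program and $P_Q$ an IDB predicate of $\Pi_Q$; it is temporal if $P_Q$ is temporal. For a temporal query $Q$, dataset $D$ and time point $\tau$, $Q(D,\tau)$ is the set of tuples of objects $\vec o$ with $\Pi_Q\cup D\models P_Q(\vec o,\tau)$. A $\tau_{in}$-history is a dataset consisting of rigid facts and temporal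 facts with time argument $\le\tau_{in}$; a $\tau_{in}$-update is a dataset consisting of temporal facts with time argument $>\tau_{in}$. Definitive Time Point (DTP): an instance is $\langle Q,D,\tau_{in},\tau_{out}\rangle$ with $Q$ a temporal query, $D$ a $\tau_{in}$-history and $\tau_{out}\le\tau_{in}$; DTP holds for it iff $Q(D,\tau_{out})=Q(D\cup U,\tau_{out})$ for every $\tau_{in}$-update $U$. *)

theory Defs
  imports Complex_Main
begin

section \<open>Syntax of temporal Datalog\<close>

text \<open>Objects are natural numbers, time points are integers.  Object variables and
time variables are natural numbers in two separate name spaces.\<close>

datatype sort = SObj | STime

text \<open>A term: an object constant, an object variable, a time point, or a time term
  t + k with t a time variable and k an integer (a plain time variable t is t + 0).\<close>
datatype trm = OC nat | OV nat | TC int | TV nat int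

fun trm_sort :: "trm \<Rightarrow> sort" where
  "trm_sort (OC _) = SObj" | "trm_sort (OV _) = SObj"
| "trm_sort (TC _) = STime" | "trm_sort (TV _ _) = STime"

datatype var = ObjVar nat | TimeVar nat

fun trm_vars :: "trm \<Rightarrow> var set" where
  "trm_vars (OC _) = {}" | "trm_vars (OV x) = {ObjVar x}"
| "trm_vars (TC _) = {}" | "trm_vars (TV x _) = {TimeVar x}"

text \<open>A predicate: a name, a flag telling whether it is intensional (IDB, True) or
  extensional (EDB, False), and the list of sorts of its positions (its arity is the
  length of that list).\<close>
datatype pred = Pred (pname: nat) (pidb: bool) (psorts: "sort list")

definition rigid :: "pred \<Rightarrow> bool" where
  "rigid p \<longleftrightarrow> (\<forall>s\<in>set (psorts p). s = SObj)"

definition temporal :: "pred \<Rightarrow> bool" where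
  "temporal p \<longleftrightarrow> psorts p \<noteq> [] \<and> last (psorts p) = STime
     \<and> (\<forall>s\<in>set (butlast (psorts p)). s = SObj)"

datatype atom = Atom (apred: pred) (aargs: "trm list")

definition atom_vars :: "atom \<Rightarrow> var set" where
  "atom_vars a = (\<Union>t\<in>set (aargs a). trm_vars t)"

definition wf_atom :: "atom \<Rightarrow> bool" where
  "wf_atom a \<longleftrightarrow> map trm_sort (aargs a) = psorts (apred a)
     \<and> (rigid (apred a) \<or> temporal (apred a))"

datatype rule = Rule (body: "atom list") (head: atom)

definition wf_rule :: "rule \<Rightarrow> bool" where
  "wf_rule r \<longleftrightarrow> (\<forall>a\<in>set (body r). wf_atom a) \<and> wf_atom (head r)
     \<and> (body r \<noteq> [] \<longrightarrow> pidb (apred (head r)))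
     \<and> atom_vars (head r) \<subseteq> (\<Union>a\<in>set (body r). atom_vars a)"

type_synonym program = "rule list"

definition wf_program :: "program \<Rightarrow> bool" where
  "wf_program P \<longleftrightarrow> (\<forall>r\<in>set P. wf_rule r)"

definition is_fact :: "atom \<Rightarrow> bool" where
  "is_fact a \<longleftrightarrow> wf_atom a \<and> atom_vars a = {}"

type_synonym dataset = "atom list"

definition is_dataset :: "dataset \<Rightarrow> bool" where
  "is_dataset D \<longleftrightarrow> (\<forall>a\<in>set D. is_fact a \<and> \<not> pidb (apred a))"

definition fact_rule :: "atom \<Rightarrow> rule" where
  "fact_rule a = Rule [] a"

section \<open>Semantics\<close>

datatype val = VO nat | VT int

type_synonym interp = "pred \<Rightarrow> val list set"
type_synonym valuation = "(nat \<Rightarrow> nat) \<times> (nat \<Rightarrow> int)"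

fun eval_trm :: "valuation \<Rightarrow> trm \<Rightarrow> val" where
  "eval_trm \<sigma> (OC c) = VO c"
| "eval_trm \<sigma> (OV x) = VO (fst \<sigma> x)"
| "eval_trm \<sigma> (TC t) = VT t"
| "eval_trm \<sigma> (TV x k) = VT (snd \<sigma> x + k)"

definition sat_atom :: "interp \<Rightarrow> valuation \<Rightarrow> atom \<Rightarrow> bool" where
  "sat_atom I \<sigma> a \<longleftrightarrow> map (eval_trm \<sigma>) (aargs a) \<in> I (apred a)"

definition is_model :: "interp \<Rightarrow> rule set \<Rightarrow> bool" where
  "is_model I R \<longleftrightarrow> (\<forall>r\<in>R. \<forall>\<sigma>. (\<forall>b\<in>set (body r). sat_atom I \<sigma> b) \<longrightarrow> sat_atom I \<sigma> (head r))"

definition entails :: "rule set \<Rightarrow> atom \<Rightarrow> bool" where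
  "entails R a \<longleftrightarrow> (\<forall>I. is_model I R \<longrightarrow> (\<forall>\<sigma>. sat_atom I \<sigma> a))"

definition prog_with_data :: "program \<Rightarrow> dataset \<Rightarrow> rule set" where
  "prog_with_data P D = set P \<union> fact_rule ` set D"

type_synonym query = "pred \<times> program"

definition preds_of :: "program \<Rightarrow> pred set" where
  "preds_of P = (\<Union>r\<in>set P. apred ` (set (body r) \<union> {head r}))"

definition is_query :: "query \<Rightarrow> bool" where
  "is_query Q \<longleftrightarrow> wf_program (snd Q) \<and> pidb (fst Q) \<and> fst Q \<in> preds_of (snd Q)"

definition is_temporal_query :: "query \<Rightarrow> bool" where
  "is_temporal_query Q \<longleftrightarrow> is_query Q \<and> temporal (fst Q)"

definition answers :: "query \<Rightarrow> dataset \<Rightarrow> int \<Rightarrow> nat list set" where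
  "answers Q D \<tau> = {os. entails (prog_with_data (snd Q) D)
                         (Atom (fst Q) (map OC os @ [TC \<tau>]))}"

section \<open>Query evaluation and DTP\<close>

datatype const = CO nat | CT int

fun const_trm :: "const \<Rightarrow> trm" where
  "const_trm (CO c) = OC c" | "const_trm (CT t) = TC t"

type_synonym qe_inst = "query \<times> dataset \<times> const list"

definition qe_instance :: "qe_inst \<Rightarrow> bool" where
  "qe_instance I = (case I of (Q, D, a) \<Rightarrow>
     is_query Q \<and> is_dataset D \<and> map (trm_sort \<circ> const_trm) a = psorts (fst Q))"

definition qe_holds :: "qe_inst \<Rightarrow> bool" where
  "qe_holds I = (case I of (Q, D, a) \<Rightarrow>
     entails (prog_with_data (snd Q) D) (Atom (fst Q) (map const_trm a)))"

definition atom_time :: "atom \<Rightarrow> int option" where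
  "atom_time a = (case aargs a of [] \<Rightarrow> None | ts \<Rightarrow>
     (case last ts of TC t \<Rightarrow> Some t | _ \<Rightarrow> None))"

definition is_history :: "int \<Rightarrow> dataset \<Rightarrow> bool" where
  "is_history \<tau>in D \<longleftrightarrow> is_dataset D \<and>
     (\<forall>a\<in>set D. rigid (apred a) \<or> (temporal (apred a) \<and> (\<exists>t. atom_time a = Some t \<and> t \<le> \<tau>in)))"

definition is_update :: "int \<Rightarrow> dataset \<Rightarrow> bool" where
  "is_update \<tau>in U \<longleftrightarrow> is_dataset U \<and>
     (\<forall>a\<in>set U. temporal (apred a) \<and> (\<exists>t. atom_time a = Some t \<and> t > \<tau>in))"

type_synonym dtp_inst = "query \<times> dataset \<times> int \<times> int"

definition dtp_instance :: "dtp_inst \<Rightarrow> bool" where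
  "dtp_instance J = (case J of (Q, D, \<tau>in, \<tau>out) \<Rightarrow>
     is_temporal_query Q \<and> is_history \<tau>in D \<and> \<tau>out \<le> \<tau>in)"

definition dtp_holds :: "dtp_inst \<Rightarrow> bool" where
  "dtp_holds J = (case J of (Q, D, \<tau>in, \<tau>out) \<Rightarrow>
     (\<forall>U. is_update \<tau>in U \<longrightarrow> answers Q D \<tau>out = answers Q (D @ U) \<tau>out))"

section \<open>Encoding of instances as strings\<close>

datatype sym = S0 | S1 | SLeaf | SEnd | SOpen | SClose

datatype sexp = Leaf nat | Node "sexp list"

fun bin :: "nat \<Rightarrow> sym list" where
  "bin n = (if n = 0 then [] else bin (n div 2) @ [if even n then S0 else S1])"

fun ser :: "sexp \<Rightarrow> sym list" where
  "ser (Leaf n) = SLeaf # bin n @ [SEnd]"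
| "ser (Node xs) = SOpen # concat (map ser xs) @ [SClose]"

definition enc_int :: "int \<Rightarrow> sexp" where
  "enc_int i = Node [Leaf (if i < 0 then 1 else 0), Leaf (nat \<bar>i\<bar>)]"

fun enc_sort :: "sort \<Rightarrow> sexp" where
  "enc_sort SObj = Leaf 0" | "enc_sort STime = Leaf 1"

fun enc_pred :: "pred \<Rightarrow> sexp" where
  "enc_pred (Pred n b ss) = Node [Leaf n, Leaf (if b then 1 else 0), Node (map enc_sort ss)]"

fun enc_trm :: "trm \<Rightarrow> sexp" where
  "enc_trm (OC c) = Node [Leaf 0, Leaf c]"
| "enc_trm (OV x) = Node [Leaf 1, Leaf x]"
| "enc_trm (TC t) = Node [Leaf 2, enc_int t]"
| "enc_trm (TV x k) = Node [Leaf 3, Leaf x, enc_int k]"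

fun enc_atom :: "atom \<Rightarrow> sexp" where
  "enc_atom (Atom p ts) = Node [enc_pred p, Node (map enc_trm ts)]"

fun enc_rule :: "rule \<Rightarrow> sexp" where
  "enc_rule (Rule bs h) = Node [Node (map enc_atom bs), enc_atom h]"

definition enc_query :: "query \<Rightarrow> sexp" where
  "enc_query Q = Node [enc_pred (fst Q), Node (map enc_rule (snd Q))]"

definition enc_dataset :: "dataset \<Rightarrow> sexp" where
  "enc_dataset D = Node (map enc_atom D)"

fun enc_const :: "const \<Rightarrow> sexp" where
  "enc_const (CO c) = Node [Leaf 0, Leaf c]" | "enc_const (CT t) = Node [Leaf 1, enc_int t]"

definition enc_qe :: "qe_inst \<Rightarrow> sym list" where
  "enc_qe I = (case I of (Q, D, a) \<Rightarrow>
     ser (Node [enc_query Q, enc_dataset D, Node (map enc_const a)]))"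

definition enc_dtp :: "dtp_inst \<Rightarrow> sym list" where
  "enc_dtp J = (case J of (Q, D, ti, to) \<Rightarrow>
     ser (Node [enc_query Q, enc_dataset D, enc_int ti, enc_int to]))"

section \<open>Logspace transducers\<close>

text \<open>A deterministic Turing transducer with a read-only two-way input tape (with
  endmarkers, read as None), one read/write work tape, and a write-only one-way outp
  tape.  States are 0..<nst (0 initial, 1 halting), work symbols 0..<nwk (0 blank).
  The transition maps (state, input symbol, work symbol) to
  (new state, written work symbol, input head move, work head move, outp symbol or none).\<close>
record tm =
  nst :: nat
  nwk :: nat
  delta :: "nat \<Rightarrow> sym option \<Rightarrow> nat \<Rightarrow> nat \<times> nat \<times> int \<times> int \<times> sym option"

definition wf_tm :: "tm \<Rightarrow> bool" where
  "wf_tm M \<longleftrightarrow> 2 \<le> nst M \<and> 1 \<le> nwk M \<and>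
     (\<forall>q<nst M. \<forall>a g. g < nwk M \<longrightarrow>
        (case delta M q a g of (q', g', di, dw, _) \<Rightarrow>
           q' < nst M \<and> g' < nwk M \<and> di \<in> {-1, 0, 1} \<and> dw \<in> {-1, 0, 1}))"

record config =
  cstate :: nat
  ipos :: int
  wtape :: "int \<Rightarrow> nat"
  wpos :: int
  outp :: "sym list"

definition init_config :: config where
  "init_config = \<lparr>cstate = 0, ipos = 0, wtape = (\<lambda>_. 0), wpos = 0, outp = []\<rparr>"

definition read_input :: "sym list \<Rightarrow> int \<Rightarrow> sym option" where
  "read_input w p = (if 1 \<le> p \<and> p \<le> int (length w) then Some (w ! nat (p - 1)) else None)"

definition tm_step :: "tm \<Rightarrow> sym list \<Rightarrow> config \<Rightarrow> config" where
  "tm_step M w c = (if cstate c = 1 then c else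
     (case delta M (cstate c) (read_input w (ipos c)) (wtape c (wpos c)) of
        (q', g', di, dw, out) \<Rightarrow>
          \<lparr>cstate = q',
           ipos = max 0 (min (int (length w) + 1) (ipos c + di)),
           wtape = (wtape c)(wpos c := g'),
           wpos = wpos c + dw,
           outp = outp c @ (case out of None \<Rightarrow> [] | Some s \<Rightarrow> [s])\<rparr>))"

definition tm_run :: "tm \<Rightarrow> sym list \<Rightarrow> nat \<Rightarrow> config" where
  "tm_run M w k = (tm_step M w ^^ k) init_config"

definition tm_computes :: "tm \<Rightarrow> sym list \<Rightarrow> sym list \<Rightarrow> bool" where
  "tm_computes M w v \<longleftrightarrow> (\<exists>k. cstate (tm_run M w k) = 1 \<and> outp (tm_run M w k) = v)"

definition tm_space_bounded :: "tm \<Rightarrow> sym list \<Rightarrow> real \<Rightarrow> bool" where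
  "tm_space_bounded M w s \<longleftrightarrow> (\<forall>k. real_of_int \<bar>wpos (tm_run M w k)\<bar> \<le> s)"

definition logspace_computable ::
  "('a \<Rightarrow> bool) \<Rightarrow> ('a \<Rightarrow> sym list) \<Rightarrow> ('b \<Rightarrow> sym list) \<Rightarrow> ('a \<Rightarrow> 'b) \<Rightarrow> bool" where
  "logspace_computable isdom encA encB f \<longleftrightarrow>
     (\<exists>M c. wf_tm M \<and> (\<forall>x. isdom x \<longrightarrow>
        tm_computes M (encA x) (encB (f x)) \<and>
        tm_space_bounded M (encA x) (c * log 2 (real (length (encA x)) + 2))))"

end

theory Submission
  imports Defs "HOL-Library.Countable"
begin

text \<open>Copy program and data onto fresh predicates and add, for every rule, a hit rule that
  derives a nullary flag from the copied body and a marker fact for the rule head.  The only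
  marker fact is the one for the target tuple, so the flag is entailed iff the target fact is.
  The new query asks for goal(t), which follows from the flag, from late(t) for an EDB predicate
  late absent from the history, and from goal(t + 1).  With t_out = 0 and t_in = 2^n - 1 for
  the input length n (above every time point of the input), goal(0) holds after every update if
  the target fact is entailed; otherwise it fails on the history but holds after the update
  late(t_in + 1).  The reduction is computed by a finite-state transducer without work space,
  since the nesting depth of the encodings is bounded and t_in is written in binary as n ones.\<close>

declare bin.simps [simp del]

lemma is_model_prog_with_data:
  "is_model I (prog_with_data P D) \<longleftrightarrow>
     (\<forall>r\<in>set P. \<forall>\<sigma>. (\<forall>b\<in>set (body r). sat_atom I \<sigma> b) \<longrightarrow> sat_atom I \<sigma> (head r))
   \<and> (\<forall>x\<in>set D. \<forall>\<sigma>. sat_atom I \<sigma> x)"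
  unfolding prog_with_data_def is_model_def fact_rule_def by (auto simp: ball_Un)

fun const_val :: "const \<Rightarrow> val" where
  "const_val (CO c) = VO c" | "const_val (CT t) = VT t"

lemma eval_trm_const_trm [simp]: "eval_trm \<sigma> (const_trm c) = const_val c"
  by (cases c) auto

section \<open>The reduction\<close>

text \<open>The names 4n+2 and 2n+1 are disjoint from each other and from the names 0 and 4 of
  the fixed predicates below; in binary they arise from the name n by appending 10 resp. 1,
  which a transducer can do on the fly.  The marker of a predicate has the opposite IDB flag,
  so that the marker of the (IDB) query predicate may occur in a dataset.\<close>

definition copy_pred :: "pred \<Rightarrow> pred" where
  "copy_pred p = Pred (4 * pname p + 2) (pidb p) (psorts p)"

definition mark_pred :: "pred \<Rightarrow> pred" where
  "mark_pred p = Pred (2 * pname p + 1) (\<not> pidb p) (psorts p)"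

definition copy_atom :: "atom \<Rightarrow> atom" where
  "copy_atom a = Atom (copy_pred (apred a)) (aargs a)"

definition mark_atom :: "atom \<Rightarrow> atom" where
  "mark_atom a = Atom (mark_pred (apred a)) (aargs a)"

definition hit_pred :: pred where "hit_pred = Pred 0 True []"
definition hit_atom :: atom where "hit_atom = Atom hit_pred []"
definition goal_pred :: pred where "goal_pred = Pred 0 True [STime]"
definition always_pred :: pred where "always_pred = Pred 4 True [STime]"
definition late_pred :: pred where "late_pred = Pred 0 False [STime]"

definition copy_rule :: "rule \<Rightarrow> rule" where
  "copy_rule r = Rule (map copy_atom (body r)) (copy_atom (head r))"

definition hit_rule :: "rule \<Rightarrow> rule" where
  "hit_rule r = Rule (map copy_atom (body r) @ [mark_atom (head r)]) hit_atom"

definition goal_rules :: "rule list" where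
  "goal_rules =
    [Rule [] (Atom always_pred [TC 0]),
     Rule [Atom always_pred [TV 0 0]] (Atom always_pred [TV 0 1]),
     Rule [Atom always_pred [TV 0 1]] (Atom always_pred [TV 0 0]),
     Rule [hit_atom, Atom always_pred [TV 0 0]] (Atom goal_pred [TV 0 0]),
     Rule [Atom late_pred [TV 0 0]] (Atom goal_pred [TV 0 0]),
     Rule [Atom goal_pred [TV 0 1]] (Atom goal_pred [TV 0 0])]"

definition red_program :: "query \<Rightarrow> program" where
  "red_program Q = map copy_rule (snd Q) @ goal_rules @ map hit_rule (snd Q)"

definition red_query :: "query \<Rightarrow> query" where
  "red_query Q = (goal_pred, red_program Q)"

definition red_dataset :: "query \<Rightarrow> dataset \<Rightarrow> const list \<Rightarrow> dataset" where
  "red_dataset Q D a = map copy_atom D @ [Atom (mark_pred (fst Q)) (map const_trm a)]"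

definition red_tin :: "qe_inst \<Rightarrow> int" where
  "red_tin I = 2 ^ length (enc_qe I) - 1"

lemma red_tin_nonneg: "0 \<le> red_tin I"
  by (simp add: red_tin_def)

definition reduction :: "qe_inst \<Rightarrow> dtp_inst" where
  "reduction I = (case I of (Q, D, a) \<Rightarrow> (red_query Q, red_dataset Q D a, red_tin I, 0))"

lemma inj_copy_pred: "inj copy_pred"
  by (rule injI) (auto simp: copy_pred_def intro: pred.expand)

lemma inj_mark_pred: "inj mark_pred"
  by (rule injI) (auto simp: mark_pred_def intro: pred.expand)

lemma copy_pred_neq_mark_pred [simp]: "copy_pred p \<noteq> mark_pred q" "mark_pred q \<noteq> copy_pred p"
proof -
  have "4 * pname p + 2 \<noteq> 2 * pname q + 1" by presburger
  then show "copy_pred p \<noteq> mark_pred q" "mark_pred q \<noteq> copy_pred p"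
    by (simp_all add: copy_pred_def mark_pred_def)
qed

lemma fixed_preds_neq [simp]:
  "copy_pred p \<noteq> hit_pred" "copy_pred p \<noteq> goal_pred" "copy_pred p \<noteq> always_pred" "copy_pred p \<noteq> late_pred"
  "mark_pred p \<noteq> hit_pred" "mark_pred p \<noteq> goal_pred" "mark_pred p \<noteq> always_pred" "mark_pred p \<noteq> late_pred"
  "hit_pred \<noteq> goal_pred" "hit_pred \<noteq> always_pred" "goal_pred \<noteq> always_pred" "late_pred \<noteq> goal_pred"
  "late_pred \<noteq> always_pred" "hit_pred \<noteq> late_pred"
  by (auto simp: copy_pred_def mark_pred_def hit_pred_def goal_pred_def always_pred_def late_pred_def;
      presburger)+

lemmas fixed_preds_neq' [simp] = fixed_preds_neq[THEN not_sym]

lemma copy_atom_sel [simp]: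
  "apred (copy_atom x) = copy_pred (apred x)" "aargs (copy_atom x) = aargs x"
  by (simp_all add: copy_atom_def)

lemma mark_atom_sel [simp]:
  "apred (mark_atom x) = mark_pred (apred x)" "aargs (mark_atom x) = aargs x"
  by (simp_all add: mark_atom_def)

lemma copy_pred_sel [simp]: "pidb (copy_pred p) = pidb p" "psorts (copy_pred p) = psorts p"
  by (simp_all add: copy_pred_def)

lemma mark_pred_sel [simp]: "pidb (mark_pred p) = (\<not> pidb p)" "psorts (mark_pred p) = psorts p"
  by (simp_all add: mark_pred_def)

section \<open>Correctness of the reduction\<close>

lemma is_model_goal_rules:
  assumes "is_model I (prog_with_data (red_program Q) X)"
  shows "is_model I (set goal_rules)"
  using assms by (auto simp: is_model_def prog_with_data_def red_program_def)

lemma goal_rules_sat: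
  assumes "is_model I (set goal_rules)"
  shows "[VT 0] \<in> I always_pred"
    and "[VT t] \<in> I always_pred \<Longrightarrow> [VT (t + 1)] \<in> I always_pred"
    and "[VT (t + 1)] \<in> I always_pred \<Longrightarrow> [VT t] \<in> I always_pred"
    and "[] \<in> I hit_pred \<Longrightarrow> [VT t] \<in> I always_pred \<Longrightarrow> [VT t] \<in> I goal_pred"
    and "[VT t] \<in> I late_pred \<Longrightarrow> [VT t] \<in> I goal_pred"
    and "[VT (t + 1)] \<in> I goal_pred \<Longrightarrow> [VT t] \<in> I goal_pred"
proof -
  have rule: "\<And>r. r \<in> set goal_rules \<Longrightarrow> (\<forall>b\<in>set (body r). sat_atom I (\<lambda>_. 0, \<lambda>_. t) b)
      \<Longrightarrow> sat_atom I (\<lambda>_. 0, \<lambda>_. t) (head r)" for t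
    using assms by (auto simp: is_model_def)
  show "[VT 0] \<in> I always_pred"
    using rule[of "Rule [] (Atom always_pred [TC 0])" 0] by (simp add: goal_rules_def sat_atom_def)
  show "[VT t] \<in> I always_pred \<Longrightarrow> [VT (t + 1)] \<in> I always_pred"
    using rule[of "Rule [Atom always_pred [TV 0 0]] (Atom always_pred [TV 0 1])" t]
    by (simp add: goal_rules_def sat_atom_def)
  show "[VT (t + 1)] \<in> I always_pred \<Longrightarrow> [VT t] \<in> I always_pred"
    using rule[of "Rule [Atom always_pred [TV 0 1]] (Atom always_pred [TV 0 0])" t]
    by (simp add: goal_rules_def sat_atom_def)
  show "[] \<in> I hit_pred \<Longrightarrow> [VT t] \<in> I always_pred \<Longrightarrow> [VT t] \<in> I goal_pred"
    using rule[of "Rule [hit_atom, Atom always_pred [TV 0 0]] (Atom goal_pred [TV 0 0])" t]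
    by (simp add: goal_rules_def sat_atom_def hit_atom_def)
  show "[VT t] \<in> I late_pred \<Longrightarrow> [VT t] \<in> I goal_pred"
    using rule[of "Rule [Atom late_pred [TV 0 0]] (Atom goal_pred [TV 0 0])" t]
    by (simp add: goal_rules_def sat_atom_def)
  show "[VT (t + 1)] \<in> I goal_pred \<Longrightarrow> [VT t] \<in> I goal_pred"
    using rule[of "Rule [Atom goal_pred [TV 0 1]] (Atom goal_pred [TV 0 0])" t]
    by (simp add: goal_rules_def sat_atom_def)
qed

lemma always_pred_everywhere:
  assumes "is_model I (set goal_rules)"
  shows "[VT t] \<in> I always_pred"
proof (induction t rule: int_induct[where k = 0])
  case base
  show ?case using goal_rules_sat(1)[OF assms] .
next
  case (step1 i)
  then show ?case using goal_rules_sat(2)[OF assms] by blast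
next
  case (step2 i)
  then show ?case using goal_rules_sat(3)[OF assms, of "i - 1"] by simp
qed

lemma goal_pred_downward:
  assumes "is_model I (set goal_rules)" and "[VT s] \<in> I goal_pred" and "t \<le> s"
  shows "[VT t] \<in> I goal_pred"
proof -
  have "[VT (s - int n)] \<in> I goal_pred" for n
  proof (induction n)
    case 0
    then show ?case using assms(2) by simp
  next
    case (Suc n)
    then show ?case using goal_rules_sat(6)[OF assms(1), of "s - int (Suc n)"] by simp
  qed
  from this[of "nat (s - t)"] show ?thesis using assms(3) by simp
qed

lemma is_model_copy_without_target:
  assumes inst: "qe_instance (Q, D, a)"
    and model: "is_model I (prog_with_data (red_program Q) (red_dataset Q D a @ U))"
    and no_hit: "[] \<notin> I hit_pred"
  shows "is_model (\<lambda>p. if p = fst Q then I (copy_pred p) - {map const_val a} else I (copy_pred p))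
    (prog_with_data (snd Q) D)" (is "is_model ?M _")
proof -
  have rules: "\<And>r \<sigma>. r \<in> set (red_program Q) \<Longrightarrow> \<forall>b\<in>set (body r). sat_atom I \<sigma> b
      \<Longrightarrow> sat_atom I \<sigma> (head r)"
    and facts: "\<And>x \<sigma>. x \<in> set (red_dataset Q D a) \<Longrightarrow> sat_atom I \<sigma> x"
    using model by (auto simp: is_model_prog_with_data)
  have target: "map const_val a \<in> I (mark_pred (fst Q))"
    using facts[of "Atom (mark_pred (fst Q)) (map const_trm a)" undefined]
    by (simp add: red_dataset_def sat_atom_def comp_def)
  have query_idb: "pidb (fst Q)" and data_edb: "\<And>d. d \<in> set D \<Longrightarrow> \<not> pidb (apred d)"
    using inst by (auto simp: qe_instance_def is_query_def is_dataset_def)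
  have copy_sat: "sat_atom I \<sigma> (copy_atom b)" if "sat_atom ?M \<sigma> b" for \<sigma> b
    using that by (auto simp: sat_atom_def copy_atom_def split: if_splits)
  show ?thesis
    unfolding is_model_prog_with_data
  proof (intro conjI ballI allI impI)
    fix r \<sigma> assume r: "r \<in> set (snd Q)" and b: "\<forall>b\<in>set (body r). sat_atom ?M \<sigma> b"
    have body_copy: "\<forall>b\<in>set (body (copy_rule r)). sat_atom I \<sigma> b"
      using b copy_sat by (auto simp: copy_rule_def)
    have head_copy: "sat_atom I \<sigma> (copy_atom (head r))"
      using rules[of "copy_rule r" \<sigma>] body_copy r by (auto simp: red_program_def copy_rule_def)
    show "sat_atom ?M \<sigma> (head r)"
    proof (cases "apred (head r) = fst Q \<and> map (eval_trm \<sigma>) (aargs (head r)) = map const_val a")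
      case True
      then have "\<forall>b\<in>set (body (hit_rule r)). sat_atom I \<sigma> b"
        using body_copy target by (auto simp: hit_rule_def copy_rule_def sat_atom_def)
      then have "sat_atom I \<sigma> hit_atom"
        using rules[of "hit_rule r" \<sigma>] r by (auto simp: red_program_def hit_rule_def)
      then show ?thesis using no_hit by (simp add: hit_atom_def sat_atom_def)
    next
      case False
      then show ?thesis using head_copy by (auto simp: sat_atom_def copy_atom_def)
    qed
  next
    fix d \<sigma> assume d: "d \<in> set D"
    have "sat_atom I \<sigma> (copy_atom d)" using facts d by (auto simp: red_dataset_def)
    moreover have "apred d \<noteq> fst Q" using data_edb[OF d] query_idb by auto
    ultimately show "sat_atom ?M \<sigma> d" by (auto simp: sat_atom_def copy_atom_def)
  qed
qed

lemma hit_if_qe_holds: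
  assumes inst: "qe_instance (Q, D, a)" and holds: "qe_holds (Q, D, a)"
    and model: "is_model I (prog_with_data (red_program Q) (red_dataset Q D a @ U))"
  shows "[] \<in> I hit_pred"
proof (rule ccontr)
  assume "[] \<notin> I hit_pred"
  define M where "M p = (if p = fst Q then I (copy_pred p) - {map const_val a} else I (copy_pred p))" for p
  from inst model \<open>[] \<notin> I hit_pred\<close> have "is_model M (prog_with_data (snd Q) D)"
    unfolding M_def by (rule is_model_copy_without_target)
  then have "\<forall>\<sigma>. sat_atom M \<sigma> (Atom (fst Q) (map const_trm a))"
    using holds unfolding qe_holds_def entails_def by blast
  then have "map const_val a \<in> M (fst Q)" by (simp add: sat_atom_def comp_def)
  then show False by (simp add: M_def)
qed

lemma entails_goal_if_qe_holds:
  assumes "qe_instance (Q, D, a)" and "qe_holds (Q, D, a)"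
  shows "entails (prog_with_data (red_program Q) (red_dataset Q D a @ U)) (Atom goal_pred [TC 0])"
  unfolding entails_def
proof (intro allI impI)
  fix I \<sigma> assume model: "is_model I (prog_with_data (red_program Q) (red_dataset Q D a @ U))"
  then have goal: "is_model I (set goal_rules)" by (rule is_model_goal_rules)
  show "sat_atom I \<sigma> (Atom goal_pred [TC 0])"
    using goal_rules_sat(4)[OF goal hit_if_qe_holds[OF assms model] always_pred_everywhere[OF goal]]
    by (simp add: sat_atom_def)
qed

definition lift_model :: "query \<Rightarrow> const list \<Rightarrow> interp \<Rightarrow> interp" where
  "lift_model Q a M p = (if p \<in> range copy_pred then M (inv copy_pred p)
     else if p = mark_pred (fst Q) then {map const_val a} else if p = always_pred then UNIV else {})"

lemma is_model_lift_model:
  assumes model: "is_model M (prog_with_data (snd Q) D)"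
    and target_notin: "map const_val a \<notin> M (fst Q)"
  shows "is_model (lift_model Q a M) (prog_with_data (red_program Q) (red_dataset Q D a))"
proof -
  define I where "I = lift_model Q a M"
  have rules: "\<And>r \<sigma>. r \<in> set (snd Q) \<Longrightarrow> \<forall>b\<in>set (body r). sat_atom M \<sigma> b \<Longrightarrow> sat_atom M \<sigma> (head r)"
    and facts: "\<And>x \<sigma>. x \<in> set D \<Longrightarrow> sat_atom M \<sigma> x"
    using model by (auto simp: is_model_prog_with_data)
  have I_mark: "I (mark_pred q) = (if q = fst Q then {map const_val a} else {})" for q
    by (auto simp: I_def lift_model_def inj_eq[OF inj_mark_pred])
  have I_fixed: "I hit_pred = {}" "I goal_pred = {}" "I late_pred = {}" "I always_pred = UNIV"
    by (auto simp: I_def lift_model_def)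
  have sat_copy: "sat_atom I \<sigma> (copy_atom x) = sat_atom M \<sigma> x" for \<sigma> x
    by (simp add: sat_atom_def I_def lift_model_def inv_f_f[OF inj_copy_pred])
  have "is_model I (prog_with_data (red_program Q) (red_dataset Q D a))"
    unfolding is_model_prog_with_data
  proof (intro conjI ballI allI impI)
    fix r \<sigma> assume r: "r \<in> set (red_program Q)" and b: "\<forall>b\<in>set (body r). sat_atom I \<sigma> b"
    consider (copy) r\<^sub>0 where "r\<^sub>0 \<in> set (snd Q)" "r = copy_rule r\<^sub>0" | (goal) "r \<in> set goal_rules"
      | (hit) r\<^sub>0 where "r\<^sub>0 \<in> set (snd Q)" "r = hit_rule r\<^sub>0"
      using r by (auto simp: red_program_def)
    then show "sat_atom I \<sigma> (head r)"
    proof cases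
      case copy
      then show ?thesis using b rules[of r\<^sub>0 \<sigma>] by (simp add: copy_rule_def sat_copy)
    next
      case goal
      then show ?thesis using b by (auto simp: goal_rules_def sat_atom_def I_fixed hit_atom_def)
    next
      case hit
      have "\<forall>b\<in>set (body r\<^sub>0). sat_atom M \<sigma> b" using b hit by (simp add: hit_rule_def sat_copy)
      then have "sat_atom M \<sigma> (head r\<^sub>0)" using rules hit(1) by blast
      moreover have "apred (head r\<^sub>0) = fst Q" "map (eval_trm \<sigma>) (aargs (head r\<^sub>0)) = map const_val a"
        using b hit by (auto simp: hit_rule_def sat_atom_def I_mark split: if_splits)
      ultimately show ?thesis using target_notin by (simp add: sat_atom_def)
    qed
  next
    fix x \<sigma> assume "x \<in> set (red_dataset Q D a)"
    then show "sat_atom I \<sigma> x"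
      by (auto simp: red_dataset_def sat_copy facts) (simp add: sat_atom_def I_mark comp_def)
  qed
  then show ?thesis by (simp add: I_def)
qed

lemma not_entails_goal_if_not_qe_holds:
  assumes "\<not> qe_holds (Q, D, a)"
  shows "\<not> entails (prog_with_data (red_program Q) (red_dataset Q D a)) (Atom goal_pred [TC 0])"
proof -
  from assms obtain M \<sigma>\<^sub>0 where model: "is_model M (prog_with_data (snd Q) D)"
    and no_target: "\<not> sat_atom M \<sigma>\<^sub>0 (Atom (fst Q) (map const_trm a))"
    by (auto simp: qe_holds_def entails_def)
  have "map const_val a \<notin> M (fst Q)"
    using no_target by (simp add: sat_atom_def comp_def)
  with model have "is_model (lift_model Q a M) (prog_with_data (red_program Q) (red_dataset Q D a))"
    by (rule is_model_lift_model)
  moreover have "\<not> sat_atom (lift_model Q a M) \<sigma>\<^sub>0 (Atom goal_pred [TC 0])"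
    by (auto simp: sat_atom_def lift_model_def)
  ultimately show ?thesis unfolding entails_def by blast
qed

lemma entails_goal_if_late:
  assumes "0 \<le> s"
  shows "entails (prog_with_data (red_program Q) (X @ [Atom late_pred [TC s]])) (Atom goal_pred [TC 0])"
  unfolding entails_def
proof (intro allI impI)
  fix I \<sigma> assume model: "is_model I (prog_with_data (red_program Q) (X @ [Atom late_pred [TC s]]))"
  then have goal: "is_model I (set goal_rules)" by (rule is_model_goal_rules)
  have "[VT s] \<in> I late_pred"
    using model by (simp add: is_model_prog_with_data sat_atom_def)
  then have "[VT 0] \<in> I goal_pred"
    using goal_rules_sat(5)[OF goal] goal_pred_downward[OF goal _ assms] by blast
  then show "sat_atom I \<sigma> (Atom goal_pred [TC 0])" by (simp add: sat_atom_def)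
qed

lemma answers_red_query:
  assumes "\<forall>x\<in>set X. apred x \<noteq> goal_pred"
  shows "answers (red_query Q) X 0 =
    (if entails (prog_with_data (red_program Q) X) (Atom goal_pred [TC 0]) then {[]} else {})"
proof -
  txt \<open>The goal predicate is unary, so only the empty tuple can be an answer.\<close>
  define I where "I p = (if p = goal_pred then {[VT t] | t. True} else UNIV)" for p
  have "is_model I (prog_with_data (red_program Q) X)"
    using assms unfolding is_model_def prog_with_data_def
    by (auto simp: red_program_def I_def sat_atom_def copy_rule_def copy_atom_def hit_rule_def
        hit_atom_def goal_rules_def fact_rule_def)
  then have "\<not> entails (prog_with_data (red_program Q) X) (Atom goal_pred (map OC os @ [TC 0]))"
    if "os \<noteq> []" for os
    using that unfolding entails_def by (auto simp: I_def sat_atom_def)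
  then show ?thesis
    by (auto simp: answers_def red_query_def) (metis list.map(1) self_append_conv2)
qed

lemma dtp_holds_reduction_iff:
  assumes inst: "qe_instance (Q, D, a)"
  shows "dtp_holds (reduction (Q, D, a)) \<longleftrightarrow> qe_holds (Q, D, a)"
proof -
  define \<tau> where "\<tau> = red_tin (Q, D, a)"
  have "pidb goal_pred" by (simp add: goal_pred_def)
  then have no_goal: "\<forall>x\<in>set (red_dataset Q D a @ U). apred x \<noteq> goal_pred" if "is_update \<tau> U" for U
    using that by (auto simp: red_dataset_def is_update_def is_dataset_def)
  have answers_eq: "answers (red_query Q) (red_dataset Q D a @ U) 0 =
      (if entails (prog_with_data (red_program Q) (red_dataset Q D a @ U)) (Atom goal_pred [TC 0])
       then {[]} else {})" if "is_update \<tau> U" for U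
    using answers_red_query[OF no_goal[OF that]] .
  have empty_update: "is_update \<tau> []" by (simp add: is_update_def is_dataset_def)
  have unchanged: "dtp_holds (reduction (Q, D, a)) \<longleftrightarrow> (\<forall>U. is_update \<tau> U \<longrightarrow>
      answers (red_query Q) (red_dataset Q D a) 0 = answers (red_query Q) (red_dataset Q D a @ U) 0)"
    by (simp add: dtp_holds_def reduction_def \<tau>_def)
  show ?thesis
  proof (cases "qe_holds (Q, D, a)")
    case True
    have "answers (red_query Q) (red_dataset Q D a @ U) 0 = {[]}" if "is_update \<tau> U" for U
      using answers_eq[OF that] entails_goal_if_qe_holds[OF inst True] by simp
    then show ?thesis using True unchanged empty_update by (metis append_Nil2)
  next
    case False
    define U where "U = [Atom late_pred [TC (\<tau> + 1)]]"
    have upd: "is_update \<tau> U"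
      by (simp add: U_def is_update_def is_dataset_def is_fact_def wf_atom_def late_pred_def
          temporal_def atom_vars_def atom_time_def)
    have "0 \<le> \<tau> + 1" using red_tin_nonneg by (simp add: \<tau>_def)
    then have "answers (red_query Q) (red_dataset Q D a @ U) 0 = {[]}"
      using answers_eq[OF upd] entails_goal_if_late by (simp add: U_def)
    moreover have "answers (red_query Q) (red_dataset Q D a) 0 = {}"
      using answers_eq[OF empty_update] not_entails_goal_if_not_qe_holds[OF False] by simp
    ultimately show ?thesis using False unchanged upd by auto
  qed
qed

section \<open>The reduction produces DTP instances\<close>

lemma rigid_temporal_copy_mark_pred [simp]:
  "rigid (copy_pred p) = rigid p" "temporal (copy_pred p) = temporal p"
  "rigid (mark_pred p) = rigid p" "temporal (mark_pred p) = temporal p"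
  by (simp_all add: rigid_def temporal_def)

lemma wf_atom_copy_mark_atom [simp]:
  "wf_atom (copy_atom x) = wf_atom x" "wf_atom (mark_atom x) = wf_atom x"
  by (simp_all add: wf_atom_def)

lemma atom_vars_copy_mark_atom [simp]:
  "atom_vars (copy_atom x) = atom_vars x" "atom_vars (mark_atom x) = atom_vars x"
  by (simp_all add: atom_vars_def)

lemma wf_program_red_program:
  assumes "wf_program P"
  shows "wf_program (map copy_rule P @ goal_rules @ map hit_rule P)"
proof -
  have "wf_rule (copy_rule r)" if "wf_rule r" for r
    using that unfolding wf_rule_def copy_rule_def by auto
  moreover have "wf_rule (hit_rule r)" if "wf_rule r" for r
    using that by (auto simp: wf_rule_def hit_rule_def hit_atom_def hit_pred_def wf_atom_def rigid_def
        atom_vars_def)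
  moreover have "wf_rule r" if "r \<in> set goal_rules" for r
    using that by (auto simp: goal_rules_def wf_rule_def wf_atom_def rigid_def temporal_def
        atom_vars_def always_pred_def goal_pred_def late_pred_def hit_atom_def hit_pred_def)
  ultimately show ?thesis using assms by (auto simp: wf_program_def)
qed

lemma is_temporal_query_red_query:
  assumes "is_query Q"
  shows "is_temporal_query (red_query Q)"
proof -
  have "Rule [hit_atom, Atom always_pred [TV 0 0]] (Atom goal_pred [TV 0 0]) \<in> set (red_program Q)"
    by (simp add: red_program_def goal_rules_def)
  then have "goal_pred \<in> preds_of (red_program Q)"
    unfolding preds_of_def by (rule UN_I) simp
  moreover have "temporal goal_pred" "pidb goal_pred"
    by (simp_all add: goal_pred_def temporal_def)
  ultimately show ?thesis
    using assms wf_program_red_program[of "snd Q"]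
    by (simp add: is_temporal_query_def is_query_def red_query_def red_program_def)
qed

lemma rigid_or_temporal_query_pred:
  assumes "is_query Q"
  shows "rigid (fst Q) \<or> temporal (fst Q)"
proof -
  have "fst Q \<in> preds_of (snd Q)" using assms by (simp add: is_query_def)
  then obtain r where r: "r \<in> set (snd Q)" and m: "fst Q \<in> apred ` (set (body r) \<union> {head r})"
    unfolding preds_of_def by (rule UN_E)
  from m obtain x where x: "x \<in> set (body r) \<union> {head r}" and "fst Q = apred x"
    by (rule imageE)
  moreover have "wf_rule r" using assms r by (simp add: is_query_def wf_program_def)
  then have "wf_atom x" using x by (auto simp: wf_rule_def)
  ultimately show ?thesis by (simp add: wf_atom_def)
qed

lemma ground_temporal_atom_time:
  assumes "is_fact x" and "temporal (apred x)"
  obtains t where "atom_time x = Some t" and "TC t \<in> set (aargs x)"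
proof -
  have sorts: "map trm_sort (aargs x) = psorts (apred x)" and ground: "atom_vars x = {}"
    using assms(1) by (auto simp: is_fact_def wf_atom_def)
  have "psorts (apred x) \<noteq> []" and last_sort: "last (psorts (apred x)) = STime"
    using assms(2) by (auto simp: temporal_def)
  then have nonempty: "aargs x \<noteq> []" using sorts by auto
  have "trm_sort (last (aargs x)) = STime" using sorts last_sort nonempty by (metis last_map)
  moreover have "trm_vars (last (aargs x)) = {}" using ground nonempty by (auto simp: atom_vars_def)
  ultimately obtain t where last_arg: "last (aargs x) = TC t" by (cases "last (aargs x)") auto
  show ?thesis
  proof
    show "atom_time x = Some t"
      using nonempty last_arg by (cases "aargs x") (auto simp: atom_time_def)
    show "TC t \<in> set (aargs x)" using last_arg nonempty by (metis last_in_set)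
  qed
qed

fun leaves :: "sexp \<Rightarrow> nat set" where
  "leaves (Leaf n) = {n}"
| "leaves (Node xs) = (\<Union>x\<in>set xs. leaves x)"

lemma length_bin_less_length_ser: "n \<in> leaves x \<Longrightarrow> length (bin n) < length (ser x)"
proof (induction x)
  case (Leaf m)
  then show ?case by simp
next
  case (Node xs)
  then obtain y where y: "y \<in> set xs" "n \<in> leaves y" by auto
  have "length (ser y) \<le> sum_list (map (length \<circ> ser) xs)"
    using y(1) by (intro member_le_sum_list) auto
  then show ?case using Node.IH[OF y] by (simp add: length_concat)
qed

lemma less_two_power_length_bin: "n < 2 ^ length (bin n)"
proof (induction n rule: bin.induct)
  case (1 n)
  show ?case
  proof (cases "n = 0")
    case False
    then have "n < 2 * 2 ^ length (bin (n div 2))" using 1 by linarith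
    then show ?thesis using False by (subst bin.simps) simp
  qed simp
qed

lemma abs_less_two_power_length_ser:
  assumes "nat \<bar>t\<bar> \<in> leaves x"
  shows "\<bar>t\<bar> < 2 ^ length (ser x)"
proof -
  have "nat \<bar>t\<bar> < (2::nat) ^ length (ser x)"
    using less_two_power_length_bin[of "nat \<bar>t\<bar>"] length_bin_less_length_ser[OF assms]
    by (meson less_trans one_less_numeral_iff power_strict_increasing_iff semiring_norm(76))
  then show ?thesis by (metis nat_less_iff abs_ge_zero of_nat_numeral of_nat_power)
qed

lemma time_points_bounded_by_enc_qe:
  assumes "(\<exists>d\<in>set D. TC t \<in> set (aargs d)) \<or> CT t \<in> set a"
  shows "\<bar>t\<bar> < 2 ^ length (enc_qe (Q, D, a))"
proof -
  have "nat \<bar>t\<bar> \<in> leaves (enc_trm (TC t))" by (simp add: enc_int_def)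
  then have "nat \<bar>t\<bar> \<in> leaves (enc_atom d)" if "TC t \<in> set (aargs d)" for d
    using that by (cases d) (simp del: enc_trm.simps, blast)
  moreover have "nat \<bar>t\<bar> \<in> leaves (enc_const (CT t))" by (simp add: enc_int_def)
  ultimately have "nat \<bar>t\<bar> \<in> leaves (Node [enc_query Q, enc_dataset D, Node (map enc_const a)])"
    using assms unfolding enc_dataset_def by (simp del: enc_const.simps enc_atom.simps, blast)
  moreover have "enc_qe (Q, D, a) = ser (Node [enc_query Q, enc_dataset D, Node (map enc_const a)])"
    by (simp only: enc_qe_def prod.case)
  ultimately show ?thesis by (simp only: abs_less_two_power_length_ser)
qed

lemma is_history_red_dataset:
  assumes inst: "qe_instance (Q, D, a)"
  shows "is_history (red_tin (Q, D, a)) (red_dataset Q D a)"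
proof -
  have query: "is_query Q" and data: "is_dataset D"
    and sorts: "map (trm_sort \<circ> const_trm) a = psorts (fst Q)"
    using inst by (auto simp: qe_instance_def)
  have "trm_vars (const_trm c) = {}" for c by (cases c) auto
  then have "is_fact (Atom (mark_pred (fst Q)) (map const_trm a))"
    using sorts rigid_or_temporal_query_pred[OF query]
    by (simp add: is_fact_def wf_atom_def atom_vars_def)
  then have dataset: "is_dataset (red_dataset Q D a)"
    using data query by (auto simp: red_dataset_def is_dataset_def is_fact_def is_query_def)
  have "\<exists>t. atom_time x = Some t \<and> t \<le> red_tin (Q, D, a)"
    if x: "x \<in> set (red_dataset Q D a)" and temp: "temporal (apred x)" for x
  proof -
    have "is_fact x" using dataset x by (simp add: is_dataset_def)
    then obtain t where t: "atom_time x = Some t" "TC t \<in> set (aargs x)"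
      using temp by (rule ground_temporal_atom_time)
    have "(\<exists>d\<in>set D. TC t \<in> set (aargs d)) \<or> CT t \<in> set a"
    proof (cases "x \<in> copy_atom ` set D")
      case False
      then have "TC t \<in> const_trm ` set a" using x t(2) by (simp add: red_dataset_def)
      then obtain c where c: "c \<in> set a" "const_trm c = TC t" by (metis imageE)
      have "c = CT t" using c(2) by (cases c) auto
      then show ?thesis using c(1) by simp
    qed (use t(2) in auto)
    then have "\<bar>t\<bar> < 2 ^ length (enc_qe (Q, D, a))" by (rule time_points_bounded_by_enc_qe)
    then have "t \<le> red_tin (Q, D, a)" unfolding red_tin_def by linarith
    with t(1) show ?thesis by blast
  qed
  moreover have "rigid (apred x) \<or> temporal (apred x)" if "x \<in> set (red_dataset Q D a)" for x
    using dataset that by (simp add: is_dataset_def is_fact_def wf_atom_def)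
  ultimately show ?thesis using dataset unfolding is_history_def by blast
qed

lemma dtp_instance_reduction:
  assumes "qe_instance (Q, D, a)"
  shows "dtp_instance (reduction (Q, D, a))"
  using assms is_temporal_query_red_query is_history_red_dataset[OF assms]
  by (simp add: dtp_instance_def reduction_def qe_instance_def red_tin_nonneg)

section \<open>Finite-state transducers without work space\<close>

text \<open>A step of a finite-state transducer reads the input symbol under the head, emits a
  bounded word, moves the head by -1, 0 or 1 and enters a new state (or halts, on None).
  It is simulated by a Turing transducer whose state is a pair (s, j): the current state s
  together with the number j of symbols of the current step already emitted; the work tape
  is never touched.\<close>

locale transducer =
  fixes step :: "'s::countable \<Rightarrow> sym option \<Rightarrow> 's option \<times> int \<times> sym list"
    and start :: 's
    and valid :: "'s \<Rightarrow> bool"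
    and out_bound :: nat
  assumes finite_valid: "finite {s. valid s}"
begin

definition states :: "('s \<times> nat) set" where
  "states = {(s, j). valid s \<and> j \<le> out_bound}"

text \<open>TM state 1 is reserved for halting and 0 for the start.\<close>

definition code :: "'s \<times> nat \<Rightarrow> nat" where
  "code x = (if x = (start, 0) then 0 else to_nat x + 2)"

definition decode :: "nat \<Rightarrow> 's \<times> nat" where
  "decode q = (if q = 0 then (start, 0) else from_nat (q - 2))"

definition valid_code :: "'s \<times> nat \<Rightarrow> nat" where
  "valid_code x = (if x \<in> states then code x else 1)"

definition tm_delta :: "nat \<Rightarrow> sym option \<Rightarrow> nat \<Rightarrow> nat \<times> nat \<times> int \<times> int \<times> sym option" where
  "tm_delta q a g = (if q = 1 then (1, 0, 0, 0, None) else
     (case decode q of (s, j) \<Rightarrow> (case step s a of (next, d, out) \<Rightarrow>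
        if j < length out then (valid_code (s, Suc j), 0, 0, 0, Some (out ! j))
        else (case next of
          None \<Rightarrow> (1, 0, 0, 0, None)
        | Some s' \<Rightarrow> (valid_code (s', 0), 0, if d \<in> {-1, 0, 1} then d else 0, 0, None)))))"

definition machine :: tm where
  "machine = \<lparr>nst = Max (code ` states) + 2, nwk = 1, delta = tm_delta\<rparr>"

lemma decode_code [simp]: "decode (code x) = x"
  by (simp add: code_def decode_def)

lemma code_neq_1 [simp]: "code x \<noteq> 1" "code x \<noteq> Suc 0"
  by (simp_all add: code_def)

lemma finite_states: "finite states"
proof -
  have "states = {s. valid s} \<times> {..out_bound}" by (auto simp: states_def)
  then show ?thesis using finite_valid by simp
qed

lemma wf_machine: "wf_tm machine"
proof -
  have "code x \<le> Max (code ` states)" if "x \<in> states" for x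
    using finite_states that by simp
  then have "valid_code x < Max (code ` states) + 2" for x
    by (fastforce simp: valid_code_def)
  then show ?thesis
    by (auto simp: wf_tm_def machine_def tm_delta_def split: prod.split option.split)
qed

lemma wpos_tm_step_machine: "wpos (tm_step machine w c) = wpos c"
proof -
  have "(case tm_delta (cstate c) (read_input w (ipos c)) (wtape c (wpos c)) of
      (q', g', di, dw, out) \<Rightarrow> dw) = 0"
    by (simp add: tm_delta_def split: prod.split option.split)
  then show ?thesis by (auto simp: tm_step_def machine_def split: prod.split)
qed

lemma wpos_tm_run_machine: "wpos (tm_run machine w k) = 0"
  by (induction k) (simp_all add: tm_run_def init_config_def wpos_tm_step_machine)

lemma logspace_computable_machine:
  assumes "\<And>x. isdom x \<Longrightarrow> tm_computes machine (encA x) (encB (f x))"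
  shows "logspace_computable isdom encA encB f"
  unfolding logspace_computable_def tm_space_bounded_def
  using assms wf_machine by (intro exI[of _ machine] exI[of _ 0]) (simp add: wpos_tm_run_machine)

definition conf :: "nat \<Rightarrow> int \<Rightarrow> sym list \<Rightarrow> config" where
  "conf q p os = \<lparr>cstate = q, ipos = p, wtape = (\<lambda>_. 0), wpos = 0, outp = os\<rparr>"

abbreviation conf_at :: "'s \<Rightarrow> int \<Rightarrow> sym list \<Rightarrow> config" where
  "conf_at s p os \<equiv> conf (code (s, 0)) p os"

definition reach :: "sym list \<Rightarrow> config \<Rightarrow> config \<Rightarrow> bool" where
  "reach w c c' \<longleftrightarrow> (\<exists>k. (tm_step machine w ^^ k) c = c')"

lemma reach_refl: "reach w c c"
  unfolding reach_def by (rule exI[of _ 0]) simp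

lemma reach_step: "tm_step machine w c = c' \<Longrightarrow> reach w c c'"
  unfolding reach_def by (rule exI[of _ 1]) simp

lemma reach_trans [trans]: "reach w c\<^sub>1 c\<^sub>2 \<Longrightarrow> reach w c\<^sub>2 c\<^sub>3 \<Longrightarrow> reach w c\<^sub>1 c\<^sub>3"
  unfolding reach_def by (metis funpow_add comp_apply)

lemma tm_computes_machine:
  assumes "reach w (conf_at start 0 []) (conf 1 p out)"
  shows "tm_computes machine w out"
proof -
  have "init_config = conf_at start 0 []" by (simp add: init_config_def conf_def code_def)
  with assms obtain k where "(tm_step machine w ^^ k) init_config = conf 1 p out"
    by (auto simp: reach_def)
  then show ?thesis
    unfolding tm_computes_def tm_run_def by (intro exI[of _ k]) (simp add: conf_def)
qed

lemma tm_step_machine_emit: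
  assumes "(s, Suc j) \<in> states" "step s (read_input w p) = (next, d, out)" "j < length out"
    "0 \<le> p" "p \<le> int (length w) + 1"
  shows "tm_step machine w (conf (code (s, j)) p os) = conf (code (s, Suc j)) p (os @ [out ! j])"
  using assms by (simp add: tm_step_def conf_def machine_def tm_delta_def valid_code_def fun_upd_idem_iff)

lemma reach_emit:
  assumes "valid s" "length out \<le> out_bound" "step s (read_input w p) = (next, d, out)"
    "0 \<le> p" "p \<le> int (length w) + 1"
  shows "reach w (conf_at s p os) (conf (code (s, length out)) p (os @ out))"
proof -
  have "reach w (conf_at s p os) (conf (code (s, j)) p (os @ take j out))" if "j \<le> length out" for j
    using that
  proof (induction j)
    case 0
    then show ?case by (simp add: reach_refl)
  next
    case (Suc j)
    have "(s, Suc j) \<in> states" using Suc.prems assms(1,2) by (simp add: states_def)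
    then have "tm_step machine w (conf (code (s, j)) p (os @ take j out))
        = conf (code (s, Suc j)) p ((os @ take j out) @ [out ! j])"
      using assms Suc.prems by (intro tm_step_machine_emit) auto
    then show ?case
      using Suc by (metis Suc_leD Suc_le_lessD append_assoc reach_step reach_trans take_Suc_conv_app_nth)
  qed
  from this[of "length out"] show ?thesis by simp
qed

lemma reach_move:
  assumes "valid s" "length out \<le> out_bound" "step s (read_input w p) = (Some s', d, out)"
    "valid s'" "d \<in> {-1, 0, 1}" "0 \<le> p" "p \<le> int (length w) + 1"
    "0 \<le> p + d" "p + d \<le> int (length w) + 1"
  shows "reach w (conf_at s p os) (conf_at s' (p + d) (os @ out))"
proof -
  have "tm_step machine w (conf (code (s, length out)) p (os @ out)) = conf_at s' (p + d) (os @ out)"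
    using assms by (simp add: tm_step_def conf_def machine_def tm_delta_def valid_code_def states_def
        fun_upd_idem_iff)
  then show ?thesis using reach_emit[OF assms(1-3,6,7)] reach_step reach_trans by blast
qed

lemma reach_halt:
  assumes "valid s" "length out \<le> out_bound" "step s (read_input w p) = (None, d, out)"
    "0 \<le> p" "p \<le> int (length w) + 1"
  shows "reach w (conf_at s p os) (conf 1 p (os @ out))"
proof -
  have "tm_step machine w (conf (code (s, length out)) p (os @ out)) = conf 1 p (os @ out)"
    using assms by (simp add: tm_step_def conf_def machine_def tm_delta_def fun_upd_idem_iff)
  then show ?thesis using reach_emit[OF assms] reach_step reach_trans by blast
qed

lemma reach_rewind:
  assumes "\<And>x. step s (Some x) = (Some s, -1, [])" "step s None = (Some s', 1, [])"
    and "valid s" "valid s'"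
  shows "p \<le> length w \<Longrightarrow> reach w (conf_at s (int p) os) (conf_at s' 1 os)"
proof (induction p)
  case 0
  have "read_input w 0 = None" by (simp add: read_input_def)
  then show ?case using reach_move[of s "[]" w 0 s' 1 os] assms by simp
next
  case (Suc p)
  have "read_input w (int (Suc p)) = Some (w ! p)" using Suc.prems by (simp add: read_input_def)
  then have "reach w (conf_at s (int (Suc p)) os) (conf_at s (int (Suc p) + -1) (os @ []))"
    using Suc.prems assms by (intro reach_move) auto
  then show ?case using Suc by (auto intro: reach_trans)
qed

fun run :: "'s \<Rightarrow> sym list \<Rightarrow> ('s \<times> sym list) option" where
  "run s [] = (if valid s then Some (s, []) else None)"
| "run s (x # xs) = (if valid s then
     (case step s (Some x) of
        (Some s\<^sub>1, d, out\<^sub>1) \<Rightarrow>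
          if d = 1 \<and> length out\<^sub>1 \<le> out_bound then
            (case run s\<^sub>1 xs of None \<Rightarrow> None | Some (s\<^sub>2, out\<^sub>2) \<Rightarrow> Some (s\<^sub>2, out\<^sub>1 @ out\<^sub>2))
          else None
      | (None, _) \<Rightarrow> None)
   else None)"

lemma run_append:
  "run s (xs @ ys) = (case run s xs of None \<Rightarrow> None
     | Some (s\<^sub>1, out\<^sub>1) \<Rightarrow> (case run s\<^sub>1 ys of None \<Rightarrow> None | Some (s\<^sub>2, out\<^sub>2) \<Rightarrow> Some (s\<^sub>2, out\<^sub>1 @ out\<^sub>2)))"
proof (induction xs arbitrary: s)
  case Nil
  show ?case by (cases ys) (auto split: option.split)
next
  case (Cons x xs)
  then show ?case by (auto split: option.split prod.split)
qed

lemma run_valid: "run s xs = Some r \<Longrightarrow> valid s"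
  by (cases xs) (auto split: if_splits)

lemma reach_run:
  assumes "run s xs = Some (s', out)" and "w = pre @ xs @ rest"
  shows "reach w (conf_at s (int (length pre) + 1) os)
      (conf_at s' (int (length pre) + int (length xs) + 1) (os @ out))"
  using assms
proof (induction xs arbitrary: s pre os out)
  case Nil
  then show ?case by (simp add: reach_refl split: if_splits)
next
  case (Cons x xs)
  from Cons.prems(1) obtain s\<^sub>1 out\<^sub>1 out\<^sub>2 where valid: "valid s" and first: "step s (Some x) = (Some s\<^sub>1, 1, out\<^sub>1)"
    and bound: "length out\<^sub>1 \<le> out_bound" and rest: "run s\<^sub>1 xs = Some (s', out\<^sub>2)"
    and out: "out = out\<^sub>1 @ out\<^sub>2"
    by (auto split: if_splits option.splits prod.splits)
  have "read_input w (int (length pre) + 1) = Some x"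
    using Cons.prems(2) by (simp add: read_input_def)
  then have "reach w (conf_at s (int (length pre) + 1) os) (conf_at s\<^sub>1 (int (length pre) + 1 + 1) (os @ out\<^sub>1))"
    using Cons.prems(2) first by (intro reach_move[OF valid bound _ run_valid[OF rest]]) auto
  moreover have "reach w (conf_at s\<^sub>1 (int (length (pre @ [x])) + 1) (os @ out\<^sub>1))
      (conf_at s' (int (length (pre @ [x])) + int (length xs) + 1) ((os @ out\<^sub>1) @ out\<^sub>2))"
    using Cons.prems(2) by (intro Cons.IH[OF rest]) simp
  ultimately show ?case using out by (auto intro: reach_trans simp: algebra_simps)
qed

end

section \<open>A transducer computing the reduction\<close>

datatype copy_ret = XA5 | XA7 | XB5 | XB9
datatype mark_ret = YB | YC

datatype ctrl = Start | A0 | A1 | A2 | A3 | A4 | A5 | A6 | A7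
  | RA0 copy_ret | RA1 copy_ret | RA2 copy_ret | RA3 copy_ret | RA4 copy_ret | RA5 copy_ret
  | RA6 copy_ret
  | B0 | B1 | B2 | B3 | B4 | B5 | B6 | B7 | BQ | B8 | B9 | XO | XT0 | XT1
  | XP0 mark_ret | XP1 mark_ret | XP2 mark_ret | XP3 mark_ret | XP4 mark_ret | XP5 mark_ret
  | XP6 mark_ret
  | C0 | C1 | C2 | C4 | C5 | C6 | C7 | C8 | C8b | C10 | C9
  | D0 | RWB | RWC | RWD

text \<open>Scan m r k b passes over the input, copying it if m, until k open brackets have been
  closed (for k = 0: until one complete s-expression has been read) and then enters r;
  the flag b is set inside a leaf.\<close>

datatype scan_state = G ctrl | Scan bool ctrl nat bool

type_synonym scan_result = "scan_state option \<times> int \<times> sym list"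

definition reject :: scan_result where "reject = (None, 0, [])"
definition go :: "ctrl \<Rightarrow> sym list \<Rightarrow> scan_result" where "go g os = (Some (G g), 1, os)"
definition go_scan :: "scan_state \<Rightarrow> sym list \<Rightarrow> scan_result" where "go_scan s os = (Some s, 1, os)"

fun copy_ret_state :: "copy_ret \<Rightarrow> ctrl" where
  "copy_ret_state XA5 = A5" | "copy_ret_state XA7 = A7"
| "copy_ret_state XB5 = B5" | "copy_ret_state XB9 = B9"

abbreviation "sO \<equiv> SOpen"
abbreviation "sC \<equiv> SClose"
abbreviation "sL \<equiv> SLeaf"
abbreviation "sE \<equiv> SEnd"

text \<open>The input is read in four left-to-right passes, each followed by a rewind (states RW).
  Pass A writes the goal predicate, the copied rules and the goal rules; pass B the hit rules
  and the copied dataset; pass C the target fact, built from the query predicate and the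
  tuple; pass D writes the input time point as one bit 1 per input symbol, and the output
  time point 0.  RA copies an atom, appending the bits 10 to its predicate name; XP marks a
  predicate, appending the bit 1 to its name and flipping its IDB flag.\<close>

fun ctrl_step :: "ctrl \<Rightarrow> sym option \<Rightarrow> scan_result" where
  "ctrl_step Start a = (if a = None then go A0 [] else reject)"
| "ctrl_step A0 a = (if a = Some sO then go A1 ([sO, sO] @ ser (enc_pred goal_pred) @ [sO]) else reject)"
| "ctrl_step A1 a = (if a = Some sO then go_scan (Scan False A2 0 False) [] else reject)"
| "ctrl_step A2 a = (if a = Some sO then go A3 [] else reject)"
| "ctrl_step A3 a = (if a = Some sO then go A4 [sO]
     else if a = Some sC then (Some (G RWB), -1, concat (map (ser \<circ> enc_rule) goal_rules)) else reject)"
| "ctrl_step A4 a = (if a = Some sO then go A5 [sO] else reject)"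
| "ctrl_step A5 a = (if a = Some sO then go (RA0 XA5) [sO] else if a = Some sC then go A6 [sC] else reject)"
| "ctrl_step A6 a = (if a = Some sO then go (RA0 XA7) [sO] else reject)"
| "ctrl_step A7 a = (if a = Some sC then go A3 [sC] else reject)"
| "ctrl_step (RA0 c) a = (if a = Some sO then go (RA1 c) [sO] else reject)"
| "ctrl_step (RA1 c) a = (if a = Some sL then go (RA2 c) [sL] else reject)"
| "ctrl_step (RA2 c) a = (if a = Some S0 then go (RA2 c) [S0] else if a = Some S1 then go (RA2 c) [S1]
     else if a = Some sE then go_scan (Scan True (RA3 c) 0 False) [S1, S0, sE] else reject)"
| "ctrl_step (RA3 c) a = (if a = Some sO then go_scan (Scan True (RA4 c) 1 False) [sO] else reject)"
| "ctrl_step (RA4 c) a = (if a = Some sC then go (RA5 c) [sC] else reject)"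
| "ctrl_step (RA5 c) a = (if a = Some sO then go_scan (Scan True (RA6 c) 1 False) [sO] else reject)"
| "ctrl_step (RA6 c) a = (if a = Some sC then go (copy_ret_state c) [sC] else reject)"
| "ctrl_step B0 a = (if a = Some sO then go B1 [] else reject)"
| "ctrl_step B1 a = (if a = Some sO then go_scan (Scan False B2 0 False) [] else reject)"
| "ctrl_step B2 a = (if a = Some sO then go B3 [] else reject)"
| "ctrl_step B3 a = (if a = Some sO then go B4 [sO] else if a = Some sC then go BQ [sC, sC] else reject)"
| "ctrl_step B4 a = (if a = Some sO then go B5 [sO] else reject)"
| "ctrl_step B5 a = (if a = Some sO then go (RA0 XB5) [sO] else if a = Some sC then go B6 [] else reject)"
| "ctrl_step B6 a = (if a = Some sO then go XO [sO] else reject)"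
| "ctrl_step XO a = (if a = Some sO then go (XP0 YB) [sO] else reject)"
| "ctrl_step (XP0 y) a = (if a = Some sL then go (XP1 y) [sL] else reject)"
| "ctrl_step (XP1 y) a = (if a = Some S0 then go (XP1 y) [S0] else if a = Some S1 then go (XP1 y) [S1]
     else if a = Some sE then go (XP2 y) [S1, sE] else reject)"
| "ctrl_step (XP2 y) a = (if a = Some sL then go (XP3 y) [sL] else reject)"
| "ctrl_step (XP3 y) a = (if a = Some sE then go (XP5 y) [S1, sE] else if a = Some S1 then go (XP4 y) [] else reject)"
| "ctrl_step (XP4 y) a = (if a = Some sE then go (XP5 y) [sE] else reject)"
| "ctrl_step (XP5 y) a = (if a = Some sO then go_scan (Scan True (XP6 y) 1 False) [sO] else reject)"
| "ctrl_step (XP6 y) a = (if a = Some sC then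
     (if y = YB then go XT0 [sC] else go_scan (Scan False C4 0 False) [sC, sO]) else reject)"
| "ctrl_step XT0 a = (if a = Some sO then go_scan (Scan True XT1 1 False) [sO] else reject)"
| "ctrl_step XT1 a = (if a = Some sC then go B7 [sC] else reject)"
| "ctrl_step B7 a = (if a = Some sC then go B3 ([sC] @ ser (enc_atom hit_atom) @ [sC]) else reject)"
| "ctrl_step BQ a = (if a = Some sC then go B8 [] else reject)"
| "ctrl_step B8 a = (if a = Some sO then go B9 [sO] else reject)"
| "ctrl_step B9 a = (if a = Some sO then go (RA0 XB9) [sO] else if a = Some sC then (Some (G RWC), -1, []) else reject)"
| "ctrl_step C0 a = (if a = Some sO then go C1 [] else reject)"
| "ctrl_step C1 a = (if a = Some sO then go C2 [] else reject)"
| "ctrl_step C2 a = (if a = Some sO then go (XP0 YC) [sO, sO] else reject)"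
| "ctrl_step C4 a = (if a = Some sC then go_scan (Scan False C5 0 False) [] else reject)"
| "ctrl_step C5 a = (if a = Some sO then go C6 [] else reject)"
| "ctrl_step C6 a = (if a = Some sO then go C7 [sO] else if a = Some sC then go C9 [sC, sC, sC] else reject)"
| "ctrl_step C7 a = (if a = Some sL then go C8 [sL] else reject)"
| "ctrl_step C8 a = (if a = Some sE then go_scan (Scan True C10 0 False) [sE]
     else if a = Some S1 then go C8b [S1, S0] else reject)"
| "ctrl_step C8b a = (if a = Some sE then go_scan (Scan True C10 0 False) [sE] else reject)"
| "ctrl_step C10 a = (if a = Some sC then go C6 [sC] else reject)"
| "ctrl_step C9 a = (if a = Some sC then (Some (G RWD), -1, [sO, sL, sE, sL]) else reject)"
| "ctrl_step D0 a = (if a = None then (None, 0, [sE, sC, sO, sL, sE, sL, sE, sC, sC]) else go D0 [S1])"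
| "ctrl_step RWB a = (if a = None then go B0 [] else (Some (G RWB), -1, []))"
| "ctrl_step RWC a = (if a = None then go C0 [] else (Some (G RWC), -1, []))"
| "ctrl_step RWD a = (if a = None then go D0 [] else (Some (G RWD), -1, []))"

definition emit_if :: "bool \<Rightarrow> sym list \<Rightarrow> sym list" where
  "emit_if m xs = (if m then xs else [])"

fun scanner_step :: "scan_state \<Rightarrow> sym option \<Rightarrow> scan_result" where
  "scanner_step (G g) a = ctrl_step g a"
| "scanner_step (Scan m r k b) a = (case a of None \<Rightarrow> reject | Some x \<Rightarrow>
     (if \<not> b then
        (if x = sL then (Some (Scan m r k True), 1, emit_if m [x])
         else if x = sO then (Some (Scan m r (Suc k) False), 1, emit_if m [x])
         else if x = sC then (Some (if k \<le> 1 then G r else Scan m r (k - 1) False), 1, emit_if m [x])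
         else reject)
      else
        (if x = S0 \<or> x = S1 then (Some (Scan m r k True), 1, emit_if m [x])
         else if x = sE then (Some (if k = 0 then G r else Scan m r k False), 1, emit_if m [x])
         else reject)))"

definition max_depth :: nat where "max_depth = 10"

fun bounded_state :: "scan_state \<Rightarrow> bool" where
  "bounded_state (G g) = True"
| "bounded_state (Scan m r k b) = (k \<le> max_depth)"

instance copy_ret :: countable by countable_datatype
instance mark_ret :: countable by countable_datatype
instance ctrl :: countable by countable_datatype
instance scan_state :: countable by countable_datatype

lemma finite_ctrl: "finite (UNIV :: ctrl set)"
proof -
  have copy_ret: "UNIV = set [XA5, XA7, XB5, XB9]" by (auto intro: copy_ret.exhaust)
  have mark_ret: "UNIV = set [YB, YC]" by (auto intro: mark_ret.exhaust)
  let ?A = "set [Start, A0, A1, A2, A3, A4, A5, A6, A7, B0, B1, B2, B3, B4, B5, B6, B7, BQ, B8, B9,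
    XO, XT0, XT1, C0, C1, C2, C4, C5, C6, C7, C8, C8b, C10, C9, D0, RWB, RWC, RWD]"
  let ?B = "range RA0 \<union> range RA1 \<union> range RA2 \<union> range RA3 \<union> range RA4 \<union> range RA5 \<union> range RA6"
  let ?C = "range XP0 \<union> range XP1 \<union> range XP2 \<union> range XP3 \<union> range XP4 \<union> range XP5 \<union> range XP6"
  have "g \<in> ?A \<union> ?B \<union> ?C" for g by (cases g) auto
  then have "UNIV = ?A \<union> ?B \<union> ?C" by blast
  moreover have "finite (?A \<union> ?B \<union> ?C)"
    by (simp only: copy_ret mark_ret finite_Un finite_imageI finite_set)
  ultimately show ?thesis by simp
qed

lemma finite_bounded_states: "finite {s. bounded_state s}"
proof -
  have "{s. bounded_state s} \<subseteq>
      range G \<union> (\<lambda>(m, r, k, b). Scan m r k b) ` (UNIV \<times> UNIV \<times> {..max_depth} \<times> UNIV)"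
  proof
    fix s assume s: "s \<in> {s. bounded_state s}"
    show "s \<in> range G \<union> (\<lambda>(m, r, k, b). Scan m r k b) ` (UNIV \<times> UNIV \<times> {..max_depth} \<times> UNIV)"
    proof (cases s)
      case (Scan m r k b)
      then show ?thesis using s by (auto intro!: image_eqI[where x = "(m, r, k, b)"])
    qed simp
  qed
  moreover have "finite (range G \<union> (\<lambda>(m, r, k, b). Scan m r k b) ` (UNIV \<times> UNIV \<times> {..max_depth} \<times> UNIV))"
    using finite_ctrl by simp
  ultimately show ?thesis by (rule finite_subset)
qed

interpretation scanner: transducer scanner_step "G Start" bounded_state 1000
  by unfold_locales (rule finite_bounded_states)

declare max_depth_def [simp] go_def [simp] go_scan_def [simp] reject_def [simp] emit_if_def [simp]

section \<open>Runs of the transducer on encodings\<close>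

lemma set_bin: "set (bin n) \<subseteq> {S0, S1}"
proof (induction n rule: bin.induct)
  case (1 n)
  then show ?case by (subst bin.simps) auto
qed

lemma bin_simps [simp]:
  "bin 0 = []" "bin (2 * n + 1) = bin n @ [S1]" "bin (Suc (2 * n)) = bin n @ [S1]"
  "bin (4 * n + 2) = bin n @ [S1, S0]" "bin (Suc (Suc (4 * n))) = bin n @ [S1, S0]"
  "bin 1 = [S1]" "bin (Suc 0) = [S1]" "bin 2 = [S1, S0]" "bin 3 = [S1, S1]" "bin 4 = [S1, S0, S0]"
proof -
  show odd: "bin (2 * n + 1) = bin n @ [S1]" for n by (subst bin.simps) simp
  then show "bin (Suc (2 * n)) = bin n @ [S1]" by simp
  have "bin (4 * n + 2) = bin (2 * n + 1) @ [S0]" by (subst bin.simps) simp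
  then show "bin (4 * n + 2) = bin n @ [S1, S0]" using odd by simp
  then show "bin (Suc (Suc (4 * n))) = bin n @ [S1, S0]" by simp
qed (simp_all add: bin.simps)

lemma bin_two_power_minus_one: "bin (2 ^ n - 1) = replicate n S1"
proof (induction n)
  case (Suc n)
  have "(2::nat) ^ Suc n - 1 = 2 * (2 ^ n - 1) + 1" by (induction n) auto
  then show ?case using Suc by (simp add: replicate_append_same)
qed simp

lemma emit_if_append [simp]: "emit_if m (xs @ ys) = emit_if m xs @ emit_if m ys"
  by simp

lemma scan_bits:
  "k \<le> max_depth \<Longrightarrow> set xs \<subseteq> {S0, S1} \<Longrightarrow>
    scanner.run (Scan m r k True) xs = Some (Scan m r k True, emit_if m xs)"
  by (induction xs) auto

lemma scan_bin [simp]: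
  "k \<le> max_depth \<Longrightarrow> scanner.run (Scan m r k True) (bin n) = Some (Scan m r k True, emit_if m (bin n))"
  using scan_bits set_bin by blast

lemma copy_bits:
  assumes "ctrl_step g (Some S0) = go g [S0]" "ctrl_step g (Some S1) = go g [S1]"
  shows "scanner.run (G g) (bin n) = Some (G g, bin n)"
proof -
  have "set xs \<subseteq> {S0, S1} \<Longrightarrow> scanner.run (G g) xs = Some (G g, xs)" for xs
    using assms by (induction xs) auto
  then show ?thesis using set_bin by blast
qed

lemma copy_bits_RA2_XP1 [simp]:
  "scanner.run (G (RA2 c)) (bin n) = Some (G (RA2 c), bin n)"
  "scanner.run (G (XP1 y)) (bin n) = Some (G (XP1 y), bin n)"
  by (simp_all add: copy_bits)

fun depth_le :: "nat \<Rightarrow> sexp \<Rightarrow> bool" where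
  "depth_le k (Leaf n) = True"
| "depth_le k (Node xs) = (0 < k \<and> list_all (depth_le (k - 1)) xs)"

lemma depth_le_enc_int [simp]: "1 \<le> k \<Longrightarrow> depth_le k (enc_int t)"
  by (simp add: enc_int_def)

lemma depth_le_enc_sort [simp]: "depth_le k (enc_sort s)"
  by (cases s) auto

lemma depth_le_enc_trm [simp]: "2 \<le> k \<Longrightarrow> depth_le k (enc_trm u)"
  by (cases u) auto

lemma depth_le_enc_pred [simp]: "2 \<le> k \<Longrightarrow> depth_le k (enc_pred p)"
  by (cases p) (auto simp: list_all_iff)

lemma depth_le_enc_atom [simp]: "4 \<le> k \<Longrightarrow> depth_le k (enc_atom x)"
  by (cases x) (auto simp: list_all_iff)

lemma depth_le_enc_rule [simp]: "6 \<le> k \<Longrightarrow> depth_le k (enc_rule r)"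
  by (cases r) (auto simp: list_all_iff)

lemma depth_le_enc_const [simp]: "2 \<le> k \<Longrightarrow> depth_le k (enc_const c)"
  by (cases c) auto

lemma scan_ser:
  "1 \<le> k \<Longrightarrow> k \<le> max_depth \<Longrightarrow> depth_le (max_depth - k) x \<Longrightarrow>
    scanner.run (Scan m r k False) (ser x) = Some (Scan m r k False, emit_if m (ser x))"
proof (induction x arbitrary: k)
  case (Leaf n)
  then show ?case by (simp add: scanner.run_append)
next
  case (Node xs)
  have "scanner.run (Scan m r (Suc k) False) (concat (map ser ys))
      = Some (Scan m r (Suc k) False, emit_if m (concat (map ser ys)))" if "set ys \<subseteq> set xs" for ys
    using that
  proof (induction ys)
    case (Cons y ys)
    have "scanner.run (Scan m r (Suc k) False) (ser y) = Some (Scan m r (Suc k) False, emit_if m (ser y))"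
      using Node.IH[of y "Suc k"] Cons.prems Node.prems by (auto simp: list_all_iff)
    then show ?case using Cons by (simp add: scanner.run_append del: emit_if_def)
  qed (use Node.prems in simp)
  from this[of xs] show ?case using Node.prems by (simp add: scanner.run_append del: emit_if_def) simp
qed

lemma scan_list:
  "1 \<le> k \<Longrightarrow> k \<le> max_depth \<Longrightarrow> \<forall>y\<in>set ys. depth_le (max_depth - k) (f y) \<Longrightarrow>
    scanner.run (Scan m r k False) (concat (map (ser \<circ> f) ys))
      = Some (Scan m r k False, emit_if m (concat (map (ser \<circ> f) ys)))"
proof (induction ys)
  case (Cons y ys)
  then show ?case using scan_ser[of k "f y" m r] by (simp add: scanner.run_append del: emit_if_def)
qed simp

lemma scan_top:
  assumes "depth_le max_depth x"
  shows "scanner.run (Scan m r 0 False) (ser x) = Some (G r, emit_if m (ser x))"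
proof (cases x)
  case (Node xs)
  have "scanner.run (Scan m r 1 False) (concat (map (ser \<circ> id) xs))
      = Some (Scan m r 1 False, emit_if m (concat (map (ser \<circ> id) xs)))"
    by (rule scan_list) (use assms Node in \<open>auto simp: list_all_iff\<close>)
  then show ?thesis using Node by (simp add: scanner.run_append del: emit_if_def) simp
qed (simp add: scanner.run_append)

lemmas scan_simps = scan_list scan_top

lemma run_copy_atom:
  assumes "ctrl_step g (Some sO) = go (RA0 c) [sO]"
  shows "scanner.run (G g) (ser (enc_atom x)) = Some (G (copy_ret_state c), ser (enc_atom (copy_atom x)))"
proof (cases x)
  case (Atom p ts)
  then show ?thesis
    using assms by (cases p) (simp add: scanner.run_append scan_simps copy_atom_def copy_pred_def)
qed

lemma run_copy_atoms:
  assumes "ctrl_step g (Some sO) = go (RA0 c) [sO]" and "copy_ret_state c = g"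
  shows "scanner.run (G g) (concat (map (ser \<circ> enc_atom) xs))
    = Some (G g, concat (map (ser \<circ> enc_atom) (map copy_atom xs)))"
  using run_copy_atom[OF assms(1)] assms(2) by (induction xs) (simp_all add: scanner.run_append)

lemma run_mark_atom:
  "scanner.run (G B6) (ser (enc_atom x)) = Some (G B7, ser (enc_atom (mark_atom x)))"
proof (cases x)
  case (Atom p ts)
  then show ?thesis by (cases p) (simp add: scanner.run_append scan_simps mark_atom_def mark_pred_def)
qed

lemma run_copy_rules:
  "scanner.run (G A3) (concat (map (ser \<circ> enc_rule) R))
    = Some (G A3, concat (map (ser \<circ> enc_rule) (map copy_rule R)))"
proof -
  have "scanner.run (G A3) (ser (enc_rule r)) = Some (G A3, ser (enc_rule (copy_rule r)))" for r
    by (cases r) (simp add: scanner.run_append run_copy_atoms run_copy_atom copy_rule_def comp_assoc)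
  then show ?thesis by (induction R) (simp_all add: scanner.run_append)
qed

lemma run_hit_rules:
  "scanner.run (G B3) (concat (map (ser \<circ> enc_rule) R))
    = Some (G B3, concat (map (ser \<circ> enc_rule) (map hit_rule R)))"
proof -
  have "scanner.run (G B3) (ser (enc_rule r)) = Some (G B3, ser (enc_rule (hit_rule r)))" for r
    by (cases r) (simp add: scanner.run_append run_copy_atoms run_mark_atom hit_rule_def hit_atom_def
        hit_pred_def comp_assoc)
  then show ?thesis by (induction R) (simp_all add: scanner.run_append)
qed

lemma run_const_trms:
  "scanner.run (G C6) (concat (map (ser \<circ> enc_const) a))
    = Some (G C6, concat (map (ser \<circ> enc_trm) (map const_trm a)))"
proof -
  have "scanner.run (G C6) (ser (enc_const c)) = Some (G C6, ser (enc_trm (const_trm c)))" for c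
    by (cases c) (simp_all add: scanner.run_append scan_simps enc_int_def)
  then show ?thesis by (induction a) (simp_all add: scanner.run_append)
qed

lemma read_input_at: "w = pre @ x # rest \<Longrightarrow> read_input w (int (length pre) + 1) = Some x"
  by (simp add: read_input_def)

lemma enc_qe_eq:
  "enc_qe (Q, D, a) = [sO, sO] @ ser (enc_pred (fst Q)) @ [sO] @ concat (map (ser \<circ> enc_rule) (snd Q))
    @ [sC, sC, sO] @ concat (map (ser \<circ> enc_atom) D) @ [sC, sO] @ concat (map (ser \<circ> enc_const) a)
    @ [sC] @ [sC]"
  by (simp add: enc_qe_def enc_query_def enc_dataset_def)

lemma reach_pass_A:
  "scanner.reach (enc_qe (Q, D, a)) (scanner.conf_at (G A0) 1 os)
    (scanner.conf_at (G B0) 1 (os @ [sO, sO] @ ser (enc_pred goal_pred) @ [sO]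
      @ concat (map (ser \<circ> enc_rule) (map copy_rule (snd Q))) @ concat (map (ser \<circ> enc_rule) goal_rules)))"
  (is "scanner.reach ?w _ _")
proof -
  define x where "x = [sO, sO] @ ser (enc_pred (fst Q)) @ [sO] @ concat (map (ser \<circ> enc_rule) (snd Q))"
  define out where "out = [sO, sO] @ ser (enc_pred goal_pred) @ [sO]
    @ concat (map (ser \<circ> enc_rule) (map copy_rule (snd Q)))"
  define goal where "goal = concat (map (ser \<circ> enc_rule) goal_rules)"
  define w where "w = ?w"
  have w': "w = x @ sC # [sC, sO] @ concat (map (ser \<circ> enc_atom) D) @ [sC, sO]
      @ concat (map (ser \<circ> enc_const) a) @ [sC, sC]"
    by (simp add: w_def x_def enc_qe_eq)
  have "scanner.run (G A0) x = Some (G A3, out)"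
    unfolding x_def out_def by (simp add: scanner.run_append scan_simps run_copy_rules goal_pred_def)
  from scanner.reach_run[OF this, of w "[]"] w'
  have "scanner.reach w (scanner.conf_at (G A0) 1 os)
      (scanner.conf_at (G A3) (int (length x) + 1) (os @ out))" by simp
  also have "scanner.reach w \<dots> (scanner.conf_at (G RWB) (int (length x)) ((os @ out) @ goal))"
  proof -
    have "length goal \<le> 1000"
      by (simp add: goal_def goal_rules_def always_pred_def goal_pred_def late_pred_def hit_atom_def
          hit_pred_def enc_int_def)
    then show ?thesis
      using scanner.reach_move[of "G A3" goal w "int (length x) + 1" "G RWB" "-1" "os @ out"]
        read_input_at[OF w'] w' by (simp add: goal_def)
  qed
  also have "scanner.reach w \<dots> (scanner.conf_at (G B0) 1 ((os @ out) @ goal))"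
    using w' by (intro scanner.reach_rewind) simp_all
  finally show ?thesis by (simp add: w_def out_def goal_def)
qed

lemma reach_pass_B:
  "scanner.reach (enc_qe (Q, D, a)) (scanner.conf_at (G B0) 1 os)
    (scanner.conf_at (G C0) 1 (os @ concat (map (ser \<circ> enc_rule) (map hit_rule (snd Q))) @ [sC, sC, sO]
      @ concat (map (ser \<circ> enc_atom) (map copy_atom D))))"
  (is "scanner.reach ?w _ _")
proof -
  define x where "x = [sO, sO] @ ser (enc_pred (fst Q)) @ [sO] @ concat (map (ser \<circ> enc_rule) (snd Q))
    @ [sC, sC, sO] @ concat (map (ser \<circ> enc_atom) D)"
  define out where "out = concat (map (ser \<circ> enc_rule) (map hit_rule (snd Q))) @ [sC, sC, sO]
    @ concat (map (ser \<circ> enc_atom) (map copy_atom D))"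
  define w where "w = ?w"
  have w': "w = x @ sC # [sO] @ concat (map (ser \<circ> enc_const) a) @ [sC, sC]"
    by (simp add: w_def x_def enc_qe_eq)
  have "scanner.run (G B0) x = Some (G B9, out)"
    unfolding x_def out_def by (simp add: scanner.run_append scan_simps run_hit_rules run_copy_atoms)
  from scanner.reach_run[OF this, of w "[]"] w'
  have "scanner.reach w (scanner.conf_at (G B0) 1 os)
      (scanner.conf_at (G B9) (int (length x) + 1) (os @ out))" by simp
  also have "scanner.reach w \<dots> (scanner.conf_at (G RWC) (int (length x)) (os @ out))"
    using scanner.reach_move[of "G B9" "[]" w "int (length x) + 1" "G RWC" "-1" "os @ out"]
      read_input_at[OF w'] w' by simp
  also have "scanner.reach w \<dots> (scanner.conf_at (G C0) 1 (os @ out))"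
    using w' by (intro scanner.reach_rewind) simp_all
  finally show ?thesis by (simp add: w_def out_def)
qed

lemma reach_pass_C:
  "scanner.reach (enc_qe (Q, D, a)) (scanner.conf_at (G C0) 1 os)
    (scanner.conf_at (G D0) 1 (os @ [sO] @ ser (enc_pred (mark_pred (fst Q))) @ [sO]
      @ concat (map (ser \<circ> enc_trm) (map const_trm a)) @ [sC, sC, sC] @ [sO, sL, sE, sL]))"
  (is "scanner.reach ?w _ _")
proof -
  define x where "x = [sO, sO] @ ser (enc_pred (fst Q)) @ [sO] @ concat (map (ser \<circ> enc_rule) (snd Q))
    @ [sC, sC, sO] @ concat (map (ser \<circ> enc_atom) D) @ [sC, sO] @ concat (map (ser \<circ> enc_const) a)
    @ [sC]"
  define out where "out = [sO] @ ser (enc_pred (mark_pred (fst Q))) @ [sO]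
    @ concat (map (ser \<circ> enc_trm) (map const_trm a)) @ [sC, sC, sC]"
  define w where "w = ?w"
  have w': "w = x @ sC # []" by (simp add: w_def x_def enc_qe_eq)
  have "scanner.run (G C0) x = Some (G C9, out)"
    unfolding x_def out_def
    by (cases "fst Q") (simp add: scanner.run_append scan_simps run_const_trms mark_pred_def)
  from scanner.reach_run[OF this, of w "[]"] w'
  have "scanner.reach w (scanner.conf_at (G C0) 1 os)
      (scanner.conf_at (G C9) (int (length x) + 1) (os @ out))" by simp
  also have "scanner.reach w \<dots> (scanner.conf_at (G RWD) (int (length x)) ((os @ out) @ [sO, sL, sE, sL]))"
    using scanner.reach_move[of "G C9" "[sO, sL, sE, sL]" w "int (length x) + 1" "G RWD" "-1" "os @ out"]
      read_input_at[OF w'] w' by simp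
  also have "scanner.reach w \<dots> (scanner.conf_at (G D0) 1 ((os @ out) @ [sO, sL, sE, sL]))"
    using w' by (intro scanner.reach_rewind) simp_all
  finally show ?thesis by (simp add: w_def out_def)
qed

lemma reach_pass_D:
  "scanner.reach w (scanner.conf_at (G D0) 1 os)
    (scanner.conf 1 (int (length w) + 1) (os @ replicate (length w) S1 @ [sE, sC, sO, sL, sE, sL, sE, sC, sC]))"
proof -
  have "scanner.run (G D0) xs = Some (G D0, replicate (length xs) S1)" for xs
    by (induction xs) auto
  from scanner.reach_run[OF this[of w], of w "[]" "[]"]
  have "scanner.reach w (scanner.conf_at (G D0) 1 os)
      (scanner.conf_at (G D0) (int (length w) + 1) (os @ replicate (length w) S1))" by simp
  also have "scanner.reach w \<dots>
      (scanner.conf 1 (int (length w) + 1) ((os @ replicate (length w) S1) @ [sE, sC, sO, sL, sE, sL, sE, sC, sC]))"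
    by (rule scanner.reach_halt) (simp_all add: read_input_def)
  finally show ?thesis by simp
qed

lemma enc_dtp_reduction_eq:
  "enc_dtp (reduction (Q, D, a)) = [sO, sO] @ ser (enc_pred goal_pred) @ [sO]
    @ concat (map (ser \<circ> enc_rule) (map copy_rule (snd Q))) @ concat (map (ser \<circ> enc_rule) goal_rules)
    @ concat (map (ser \<circ> enc_rule) (map hit_rule (snd Q))) @ [sC, sC, sO]
    @ concat (map (ser \<circ> enc_atom) (map copy_atom D))
    @ [sO] @ ser (enc_pred (mark_pred (fst Q))) @ [sO] @ concat (map (ser \<circ> enc_trm) (map const_trm a))
    @ [sC, sC, sC] @ [sO, sL, sE, sL]
    @ replicate (length (enc_qe (Q, D, a))) S1 @ [sE, sC, sO, sL, sE, sL, sE, sC, sC]"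
proof -
  have "bin (nat (2 ^ n - 1)) = replicate n S1" for n
    using bin_two_power_minus_one[of n] by (simp add: nat_diff_distrib nat_power_eq)
  then show ?thesis
    by (simp add: enc_dtp_def reduction_def red_query_def red_program_def enc_query_def enc_dataset_def
        red_dataset_def red_tin_def enc_int_def not_less comp_assoc)
qed

lemma reduction_computed: "tm_computes scanner.machine (enc_qe I) (enc_dtp (reduction I))"
proof -
  obtain Q D a where I: "I = (Q, D, a)" by (cases I)
  define w where "w = enc_qe (Q, D, a)"
  have "scanner.reach w (scanner.conf_at (G Start) 0 []) (scanner.conf_at (G A0) 1 [])"
    using scanner.reach_move[of "G Start" "[]" w 0 "G A0" 1 "[]"] by (simp add: read_input_def)
  also note reach_pass_A[of Q D a "[]", folded w_def]
  also note reach_pass_B[of Q D a, folded w_def]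
  also note reach_pass_C[of Q D a, folded w_def]
  also note reach_pass_D[of w]
  finally have "scanner.reach w (scanner.conf_at (G Start) 0 [])
      (scanner.conf 1 (int (length w) + 1) (enc_dtp (reduction (Q, D, a))))"
    by (simp add: w_def enc_dtp_reduction_eq)
  then show ?thesis unfolding I w_def by (rule scanner.tm_computes_machine)
qed

theorem mainTheorem4:
  shows "\<exists>\<phi> :: qe_inst \<Rightarrow> dtp_inst.
     logspace_computable qe_instance enc_qe enc_dtp \<phi>
   \<and> (\<forall>I. qe_instance I \<longrightarrow> dtp_instance (\<phi> I) \<and> (qe_holds I \<longleftrightarrow> dtp_holds (\<phi> I)))
   \<and> (\<forall>I I'. qe_instance I \<longrightarrow> qe_instance I' \<longrightarrow> fst I = fst I' \<longrightarrow>
         fst (\<phi> I) = fst (\<phi> I'))"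
proof (intro exI[of _ reduction] conjI allI impI)
  show "logspace_computable qe_instance enc_qe enc_dtp reduction"
    by (rule scanner.logspace_computable_machine) (rule reduction_computed)
next
  fix I :: qe_inst
  assume "qe_instance I"
  then show "dtp_instance (reduction I)" and "qe_holds I \<longleftrightarrow> dtp_holds (reduction I)"
    using dtp_instance_reduction dtp_holds_reduction_iff by (cases I; auto)+
next
  fix I I' :: qe_inst
  assume "fst I = fst I'"
  then show "fst (reduction I) = fst (reduction I')"
    by (auto simp: reduction_def split: prod.split)
qed

end
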